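(* Let $p \ge 2$ be an integer, let $k = 2^{p-1}$, and let $M$ be the $k \times (p+1)$ model matrix of the main effect model of the $2^{p-1}$ fractional factorial design of resolution $p$ (defined in the context). Then the set $\mathcal{B}^*$ of all square-free degree $2$ moves for $M'$ is a Markov basis for $M'$; consequently, a minimal Markov basis for $M'$ can be constructed from square-free degree $2$ moves.
   Context: Cells (runs) are indexed by $\mathbf{i} = (i_1,\ldots,i_{p-1}) \in \mathcal{I} = \{0,1\}^{p-1}$, so $|\mathcal{I}| = k = 2^{p-1}$. The $2^{p-1}$ fractional factorial design of resolution $p$ for $p$ two-level factors (levels $\pm 1$) is the design with defining relation that the product of all $p$ factors equals the identity: in run $\mathbf{i}$, factor $m$ ($1 \le m \le p-1$) is at level $(-1)^{i_m}$ and factor $p$ is at level $(-1)^{i_1+\cdots+i_{p-1}}$. The model matrix $M$ of the main effect model has one row per run $\mathbf{i}$, equal to $\big(1, (-1)^{i_1}, \ldots, (-1)^{i_{p-1}}, (-1)^{i_1+\cdots+i_{p-1}}\big)$; $M'$ is its transpose. Vectors in $\mathbb{Z}^k$ are indexed by $\mathcal{I}$. A move for $M'$ is a $\mathbf{z} \in \mathbb{Z}^k$ with $M'\mathbf{z} = \mathbf{0}$ (equivalently: for every $m$ and every $a\in\{0,1\}$, $\sum_{\mathbf{i}: i_m = a} z(\mathbf{i}) = 0$, and $\sum_{\mathbf{i}: \sum_m i_m \text{ even}} z(\mathbf{i}) = \sum_{\mathbf{i}: \sum_m i_m \text{ odd}} z(\mathbf{i}) = 0$). For $\mathbf{b} \in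 \mathbb{N}^k$ ($\mathbb{N}=\{0,1,2,\ldots\}$), the fiber is $\mathcal{F}(M'\mathbf{b}) = \{\mathbf{y} \in \mathbb{N}^k : M'\mathbf{y} = M'\mathbf{b}\}$. For a set $\mathcal{B}$ of moves, let $G(\mathbf{b},\mathcal{B})$ be the graph with vertex set $\mathcal{F}(M'\mathbf{b})$ and an edge between $\mathbf{x},\mathbf{y}$ whenever $\mathbf{y} - \mathbf{x} \in \mathcal{B}$ or $\mathbf{x} - \mathbf{y} \in \mathcal{B}$. A finite set $\mathcal{B}$ of moves is a Markov basis for $M'$ if $G(\mathbf{b},\mathcal{B})$ is connected for every $\mathbf{b} \in \mathbb{N}^k$; it is minimal if no proper subset is a Markov basis. A square-free degree $2$ move is a move $\mathbf{z}$ such that for some distinct cells $\mathbf{i}_1,\mathbf{i}_2,\mathbf{i}_3,\mathbf{i}_4$, $z(\mathbf{i}_1)=z(\mathbf{i}_2)=1$, $z(\mathbf{i}_3)=z(\mathbf{i}_4)=-1$, and $z(\mathbf{i})=0$ for all other cells. *)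

theory Defs
  imports Main
begin

text \<open>Cells (runs): lists i = (i_1,...,i_{p-1}) with entries in {0,1}.
  Vectors in Z^k are functions from cells to int, vanishing outside the cells.\<close>

definition cells :: "nat \<Rightarrow> nat list set" where
  "cells p = {xs. length xs = p - 1 \<and> set xs \<subseteq> {0, 1}}"

definition modelM :: "nat \<Rightarrow> nat list \<Rightarrow> nat \<Rightarrow> int" where
  "modelM p i j = (if j = 0 then 1
                   else if j < p then (-1) ^ (i ! (j - 1))
                   else (-1) ^ (sum_list i))"

definition Mt :: "nat \<Rightarrow> (nat list \<Rightarrow> int) \<Rightarrow> nat \<Rightarrow> int" where
  "Mt p z j = (\<Sum>i\<in>cells p. modelM p i j * z i)"

definition is_vec :: "nat \<Rightarrow> (nat list \<Rightarrow> int) \<Rightarrow> bool" where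
  "is_vec p z \<longleftrightarrow> (\<forall>i. i \<notin> cells p \<longrightarrow> z i = 0)"

definition is_nonneg_vec :: "nat \<Rightarrow> (nat list \<Rightarrow> int) \<Rightarrow> bool" where
  "is_nonneg_vec p z \<longleftrightarrow> is_vec p z \<and> (\<forall>i. 0 \<le> z i)"

definition is_move :: "nat \<Rightarrow> (nat list \<Rightarrow> int) \<Rightarrow> bool" where
  "is_move p z \<longleftrightarrow> is_vec p z \<and> (\<forall>j\<le>p. Mt p z j = 0)"

definition fiber :: "nat \<Rightarrow> (nat list \<Rightarrow> int) \<Rightarrow> (nat list \<Rightarrow> int) set" where
  "fiber p b = {y. is_nonneg_vec p y \<and> (\<forall>j\<le>p. Mt p y j = Mt p b j)}"

definition fiber_edge ::
  "nat \<Rightarrow> (nat list \<Rightarrow> int) \<Rightarrow> (nat list \<Rightarrow> int) set \<Rightarrow> (nat list \<Rightarrow> int) \<Rightarrow> (nat list \<Rightarrow> int) \<Rightarrow> bool" where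
  "fiber_edge p b B x y \<longleftrightarrow> x \<in> fiber p b \<and> y \<in> fiber p b \<and>
     ((\<lambda>i. y i - x i) \<in> B \<or> (\<lambda>i. x i - y i) \<in> B)"

definition fiber_connected :: "nat \<Rightarrow> (nat list \<Rightarrow> int) \<Rightarrow> (nat list \<Rightarrow> int) set \<Rightarrow> bool" where
  "fiber_connected p b B \<longleftrightarrow>
     (\<forall>x\<in>fiber p b. \<forall>y\<in>fiber p b. (fiber_edge p b B)\<^sup>*\<^sup>* x y)"

definition markov_basis :: "nat \<Rightarrow> (nat list \<Rightarrow> int) set \<Rightarrow> bool" where
  "markov_basis p B \<longleftrightarrow> finite B \<and> (\<forall>z\<in>B. is_move p z) \<and>
     (\<forall>b. is_nonneg_vec p b \<longrightarrow> fiber_connected p b B)"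

definition minimal_markov_basis :: "nat \<Rightarrow> (nat list \<Rightarrow> int) set \<Rightarrow> bool" where
  "minimal_markov_basis p B \<longleftrightarrow> markov_basis p B \<and> (\<forall>B'. B' \<subset> B \<longrightarrow> \<not> markov_basis p B')"

definition sqfree_deg2_moves :: "nat \<Rightarrow> (nat list \<Rightarrow> int) set" where
  "sqfree_deg2_moves p = {z. is_move p z \<and>
     (\<exists>i1 i2 i3 i4. i1 \<in> cells p \<and> i2 \<in> cells p \<and> i3 \<in> cells p \<and> i4 \<in> cells p \<and>
        distinct [i1, i2, i3, i4] \<and>
        z i1 = 1 \<and> z i2 = 1 \<and> z i3 = -1 \<and> z i4 = -1 \<and>
        (\<forall>i. i \<notin> {i1, i2, i3, i4} \<longrightarrow> z i = 0))}"

end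

theory Submission
  imports Defs "HOL-Library.Multiset"
begin

text \<open>
  A nonnegative vector on the runs is the frequency vector of a multiset X of 0/1 words of length
  q = p - 1, and M' maps it to an invertible affine image of the margins of X: its size, its q
  column sums and its number of odd-weight words. A square-free degree 2 move replaces two words of
  X by two other words with the same coordinatewise sum and the same number of odd words. So it
  suffices to connect any two multisets with equal margins by such replacements, which is done by
  induction on q, writing each word as a head bit followed by a tail.

  If X and Y have equally many words with odd tail, their multisets of tails have equal margins one
  level down; by induction the tails of X can be moved to those of Y, each move lifting to whole
  words, and exchanging heads between words whose tails have equal parity finishes. Otherwise the
  margin equations force X to have more odd-tail words than Y with either head; swapping a bit
  between the tails of two of them (or of two even-tail words of Y) changes the number of odd tails
  by two. Such a swap exists unless all odd tails in X coincide and all even tails in Y coincide,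
  which the column sum at a coordinate where these two tails differ rules out.
\<close>

lemma multi_member_pair_split:
  assumes "a \<noteq> b" "a \<in># X" "b \<in># X"
  obtains N where "X = N + {#a, b#}"
proof
  show "X = (X - {#a, b#}) + {#a, b#}"
    using assms by (intro multiset_eqI) (auto simp: Suc_le_eq)
qed

lemma count_less_elsewhere:
  assumes "size {#x \<in># A. P x#} = size {#x \<in># B. P x#}" "P v" "count B v < count A v"
  obtains u where "P u" "u \<noteq> v" "count A u < count B u"
proof -
  have size_split: "size {#x \<in># M. P x#} = size {#x \<in># M. P x \<and> x \<noteq> v#} + count M v" for M
  proof -
    have "{#x \<in># M. P x#} = {#x \<in># M. P x \<and> x \<noteq> v#} + {#x \<in># M. x = v#}"
      using \<open>P v\<close> by (induction M) auto
    then show ?thesis by (simp add: count_conv_size_mset)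
  qed
  have "size {#x \<in># A. P x \<and> x \<noteq> v#} < size {#x \<in># B. P x \<and> x \<noteq> v#}"
    using size_split[of A] size_split[of B] assms(1,3) by linarith
  then obtain u where "count {#x \<in># A. P x \<and> x \<noteq> v#} u < count {#x \<in># B. P x \<and> x \<noteq> v#} u"
    using size_lt_imp_ex_count_lt by blast
  then show thesis using that by (auto split: if_splits)
qed

lemma size_diff_exchange_less:
  assumes "X = N + {#a, b#}" "distinct [a, b, c, d]"
    and "count Y a < count X a" "count Y b < count X b"
    and "count X c < count Y c" "count X d < count Y d"
  shows "size (N + {#c, d#} - Y) < size (X - Y)"
proof -
  have "X - Y = (N + {#c, d#} - Y) + {#a, b#}"
  proof (intro multiset_eqI)
    fix i
    show "count (X - Y) i = count (N + {#c, d#} - Y + {#a, b#}) i"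
      using assms by (cases "i = a"; cases "i = b"; cases "i = c"; cases "i = d") auto
  qed
  then show ?thesis by simp
qed

lemma sum_count_eq_sum_mset:
  fixes f :: "'a \<Rightarrow> 'b::comm_semiring_1"
  assumes "finite A" "set_mset X \<subseteq> A"
  shows "(\<Sum>i\<in>A. f i * of_nat (count X i)) = (\<Sum>v\<in>#X. f v)"
  using assms(2)
proof (induction X)
  case (add a X)
  have "(\<Sum>i\<in>A. f i * of_nat (count (add_mset a X) i))
      = (\<Sum>i\<in>A. f i * of_nat (count X i)) + (\<Sum>i\<in>A. if i = a then f i else 0)"
  proof -
    have "f i * of_nat (count (add_mset a X) i) = f i * of_nat (count X i) + (if i = a then f i else 0)"
      for i by (cases "i = a") (simp_all add: algebra_simps)
    then show ?thesis by (simp add: sum.distrib)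
  qed
  also have "\<dots> = (\<Sum>v\<in>#X. f v) + f a"
    using add assms(1) by simp
  finally show ?case by (simp add: add.commute)
qed simp

section \<open>Runs as 0/1 words and their margins\<close>

definition words :: "nat \<Rightarrow> nat list set" where
  "words q = {w. length w = q \<and> set w \<subseteq> {0, 1}}"

definition parity :: "nat list \<Rightarrow> nat" where
  "parity w = sum_list w mod 2"

(* M' applied to the frequency vector of X is an invertible affine image of these statistics. *)
definition margin :: "nat \<Rightarrow> nat list multiset \<Rightarrow> nat \<times> nat list \<times> nat" where
  "margin q X = (size X, map (\<lambda>m. \<Sum>v\<in>#X. v ! m) [0..<q], \<Sum>v\<in>#X. parity v)"

(* Replacing the runs a, b by c, d is the square-free degree 2 move e_c + e_d - e_a - e_b. *)
definition deg2_step :: "nat \<Rightarrow> nat list multiset \<Rightarrow> nat list multiset \<Rightarrow> bool" where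
  "deg2_step q X Y \<longleftrightarrow> (\<exists>N a b c d. X = N + {#a, b#} \<and> Y = N + {#c, d#} \<and>
     {a, b, c, d} \<subseteq> words q \<and> distinct [a, b, c, d] \<and>
     (\<forall>m<q. a ! m + b ! m = c ! m + d ! m) \<and> parity a + parity b = parity c + parity d)"

lemma words_0: "words 0 = {[]}"
  by (auto simp: words_def)

lemma Cons_in_words_Suc [simp]: "t # w \<in> words (Suc q) \<longleftrightarrow> t \<in> {0, 1} \<and> w \<in> words q"
  by (auto simp: words_def)

lemma words_SucE:
  assumes "v \<in> words (Suc q)"
  obtains t w where "v = t # w" "t \<in> {0, 1}" "w \<in> words q"
  using assms by (cases v) (auto simp: words_def)

lemma tl_in_words: "v \<in> words (Suc q) \<Longrightarrow> tl v \<in> words q"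
  by (auto elim: words_SucE)

lemma length_words: "w \<in> words q \<Longrightarrow> length w = q"
  by (simp add: words_def)

lemma nth_words: "w \<in> words q \<Longrightarrow> m < q \<Longrightarrow> w ! m \<in> {0, 1}"
  by (auto simp: words_def dest!: nth_mem)

lemma finite_words: "finite (words q)"
  using finite_lists_length_eq[of "{0::nat, 1}" q] by (simp add: words_def conj_commute)

lemma update_in_words: "w \<in> words q \<Longrightarrow> t \<in> {0, 1} \<Longrightarrow> w[m := t] \<in> words q"
  using set_update_subset_insert[of w m t] by (auto simp: words_def)

lemma words_neq_nthE:
  assumes "a \<in> words q" "b \<in> words q" "a \<noteq> b"
  obtains m where "m < q" "a ! m \<noteq> b ! m"
  using assms nth_equalityI[of a b] by (auto simp: length_words)

lemma parity_le_1: "parity w \<le> 1"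
  by (simp add: parity_def)

lemma parity_Cons: "parity (t # w) = (t + parity w) mod 2"
  by (simp add: parity_def mod_add_right_eq)

lemma parity_update_bit:
  assumes "m < length w" "w ! m \<in> {0, 1}" "t \<in> {0, 1}" "t \<noteq> w ! m"
  shows "parity (w[m := t]) = 1 - parity w"
proof -
  have "sum_list (w[m := t]) + w ! m = sum_list w + t"
    using sum_list_update[OF assms(1)] elem_le_sum_list[OF assms(1)] by simp
  then have "sum_list (w[m := t]) + 1 = sum_list w \<or> sum_list (w[m := t]) = sum_list w + 1"
    using assms(2-4) by auto
  moreover have "a + 1 = b \<or> a = b + 1 \<Longrightarrow> a mod 2 = 1 - b mod 2" for a b :: nat
    by (auto simp: mod_Suc)
  ultimately show ?thesis unfolding parity_def by blast
qed

lemma margin_eq_iff: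
  "margin q X = margin q Y \<longleftrightarrow> size X = size Y \<and>
     (\<forall>m<q. (\<Sum>v\<in>#X. v ! m) = (\<Sum>v\<in>#Y. v ! m)) \<and> (\<Sum>v\<in>#X. parity v) = (\<Sum>v\<in>#Y. parity v)"
  by (auto simp: margin_def)

lemma symp_deg2_step: "symp (deg2_step q)"
  unfolding deg2_step_def symp_def by (smt (verit) distinct_length_2_or_more insert_commute)

lemma deg2_step_margin: "deg2_step q X Y \<Longrightarrow> margin q X = margin q Y"
  unfolding deg2_step_def margin_eq_iff by auto

lemma deg2_step_words: "deg2_step q X Y \<Longrightarrow> set_mset X \<subseteq> words q \<Longrightarrow> set_mset Y \<subseteq> words q"
  unfolding deg2_step_def by auto

lemma deg2_steps_margin: "(deg2_step q)\<^sup>*\<^sup>* X Y \<Longrightarrow> margin q X = margin q Y"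
  by (induction rule: rtranclp_induct) (auto dest: deg2_step_margin)

lemma deg2_steps_words: "(deg2_step q)\<^sup>*\<^sup>* X Y \<Longrightarrow> set_mset X \<subseteq> words q \<Longrightarrow> set_mset Y \<subseteq> words q"
  by (induction rule: rtranclp_induct) (auto dest: deg2_step_words)

definition odd_tails :: "nat list multiset \<Rightarrow> nat" where
  "odd_tails X = (\<Sum>v\<in>#X. parity (tl v))"

definition class_count :: "nat list multiset \<Rightarrow> nat \<Rightarrow> nat \<Rightarrow> nat" where
  "class_count X e t = size {#v \<in># X. parity (tl v) = e \<and> hd v = t#}"

lemma sum_mset_nth_Suc:
  assumes "set_mset X \<subseteq> words (Suc q)"
  shows "(\<Sum>v\<in>#X. v ! Suc m) = (\<Sum>v\<in>#X. tl v ! m)"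
  using assms by (intro arg_cong[where f = sum_mset] image_mset_cong) (auto elim!: words_SucE)

lemma margin_tails:
  assumes "set_mset X \<subseteq> words (Suc q)"
  shows "margin q (image_mset tl X) = (size X, map (\<lambda>m. \<Sum>v\<in>#X. v ! Suc m) [0..<q], odd_tails X)"
  using sum_mset_nth_Suc[OF assms]
  by (simp add: margin_def odd_tails_def image_mset.compositionality o_def)

lemma margin_tails_eq:
  assumes "set_mset X \<subseteq> words (Suc q)" "set_mset Y \<subseteq> words (Suc q)"
    and "margin (Suc q) X = margin (Suc q) Y" "odd_tails X = odd_tails Y"
  shows "margin q (image_mset tl X) = margin q (image_mset tl Y)"
  using assms by (simp add: margin_tails margin_eq_iff)

lemma words_Suc_classE:
  assumes "v \<in> words (Suc q)"
  obtains w where "v = 0 # w" "parity w = 0" | w where "v = 0 # w" "parity w = 1"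
    | w where "v = 1 # w" "parity w = 0" | w where "v = 1 # w" "parity w = 1"
proof -
  have "parity w = 0 \<or> parity w = 1" for w
    using parity_le_1[of w] by auto
  with assms that show thesis by (elim words_SucE) blast
qed

lemma class_counts:
  assumes "set_mset X \<subseteq> words (Suc q)"
  shows "size X = class_count X 0 0 + class_count X 0 1 + class_count X 1 0 + class_count X 1 1"
    and "(\<Sum>v\<in>#X. v ! 0) = class_count X 0 1 + class_count X 1 1"
    and "(\<Sum>v\<in>#X. parity v) = class_count X 0 1 + class_count X 1 0"
    and "odd_tails X = class_count X 1 0 + class_count X 1 1"
  using assms
  by (induction X) (auto simp: class_count_def odd_tails_def parity_Cons elim!: words_Suc_classE)

lemma margin_Suc_eqD:
  assumes "margin (Suc q) X = margin (Suc q) Y"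
  shows "size X = size Y" "(\<Sum>v\<in>#X. v ! 0) = (\<Sum>v\<in>#Y. v ! 0)"
    "(\<Sum>v\<in>#X. parity v) = (\<Sum>v\<in>#Y. parity v)"
  using assms by (auto simp: margin_eq_iff)

lemma class_counts_eq:
  assumes X: "set_mset X \<subseteq> words (Suc q)" and Y: "set_mset Y \<subseteq> words (Suc q)"
    and "margin (Suc q) X = margin (Suc q) Y" "odd_tails X = odd_tails Y" "e \<le> 1" "t \<le> 1"
  shows "class_count X e t = class_count Y e t"
  using assms(4-6) class_counts[OF X] class_counts[OF Y] margin_Suc_eqD[OF assms(3)]
  by (auto simp: le_Suc_eq)

lemma count_image_tl:
  assumes "set_mset X \<subseteq> words (Suc q)"
  shows "count (image_mset tl X) w = count X (0 # w) + count X (1 # w)"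
  using assms by (induction X) (auto elim!: words_SucE)

lemma odd_tails_image_tl: "odd_tails X = (\<Sum>w\<in>#image_mset tl X. parity w)"
  by (simp add: odd_tails_def image_mset.compositionality o_def)

section \<open>Steps changing the number of odd tails\<close>

(* Equal margins force the class counts of X and Y to differ by k (-1, -1, 1, 1), so in particular
   odd_tails X - odd_tails Y = 2 k. *)
lemma class_counts_shift:
  assumes X: "set_mset X \<subseteq> words (Suc q)" and Y: "set_mset Y \<subseteq> words (Suc q)"
    and "margin (Suc q) X = margin (Suc q) Y" "odd_tails Y < odd_tails X"
  shows "class_count Y 1 0 < class_count X 1 0" "class_count Y 1 1 < class_count X 1 1"
    and "class_count X 0 0 < class_count Y 0 0" "class_count X 0 1 < class_count Y 0 1"
    and "odd_tails Y + 2 \<le> odd_tails X"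
proof -
  define k where "k = int (class_count X 1 1) - int (class_count Y 1 1)"
  have "int (class_count X 1 0) - int (class_count Y 1 0) = k"
    "int (class_count Y 0 1) - int (class_count X 0 1) = k"
    "int (class_count Y 0 0) - int (class_count X 0 0) = k"
    using class_counts[OF X] class_counts[OF Y] margin_Suc_eqD[OF assms(3)] unfolding k_def by linarith+
  moreover from this(1) have "int (odd_tails X) - int (odd_tails Y) = 2 * k"
    using class_counts(4)[OF X] class_counts(4)[OF Y] unfolding k_def by (simp; linarith)
  moreover from this have "0 < k" using assms(4) by linarith
  ultimately show "class_count Y 1 0 < class_count X 1 0" "class_count Y 1 1 < class_count X 1 1"
    and "class_count X 0 0 < class_count Y 0 0" "class_count X 0 1 < class_count Y 0 1"
    and "odd_tails Y + 2 \<le> odd_tails X"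
    unfolding k_def by auto
qed

lemma class_count_posE:
  assumes "set_mset X \<subseteq> words (Suc q)" "0 < class_count X e t"
  obtains w where "t # w \<in># X" "parity w = e"
proof -
  have "{#v \<in># X. parity (tl v) = e \<and> hd v = t#} \<noteq> {#}"
    using assms(2) unfolding class_count_def by (metis less_irrefl size_empty)
  then obtain v where "v \<in># X" "parity (tl v) = e" "hd v = t"
    by auto
  with assms(1) that show thesis by (auto elim!: words_SucE)
qed

(* As the heads differ, exchanging bit m of the tails keeps the parity margin but flips both
   tail parities. *)
lemma deg2_step_swap_bit:
  assumes X: "set_mset X \<subseteq> words (Suc q)" and a: "0 # w \<in># X" and b: "1 # w' \<in># X"
    and par: "parity w' = parity w" and m: "m < q" "w ! m \<noteq> w' ! m"
  obtains X' where "deg2_step (Suc q) X X'"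
    "odd_tails X' + 2 * parity w = odd_tails X + 2 * (1 - parity w)"
proof -
  have w: "w \<in> words q" "w' \<in> words q" using X a b by auto
  then have bits: "w ! m \<in> {0, 1}" "w' ! m \<in> {0, 1}" using m nth_words by auto
  have len: "length w = q" "length w' = q" using w by (simp_all add: length_words)
  define c where "c = 0 # w[m := w' ! m]"
  define d where "d = 1 # w'[m := w ! m]"
  obtain N where N: "X = N + {#0 # w, 1 # w'#}"
    using multi_member_pair_split[of "0 # w" "1 # w'" X] a b by auto
  have flip: "parity (w[m := w' ! m]) = 1 - parity w" "parity (w'[m := w ! m]) = 1 - parity w"
    using parity_update_bit[of m w "w' ! m"] parity_update_bit[of m w' "w ! m"] len m bits par
    by auto
  have "deg2_step (Suc q) X (N + {#c, d#})"
    unfolding deg2_step_def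
  proof (intro exI conjI)
    show "X = N + {#0 # w, 1 # w'#}" by (fact N)
    show "{0 # w, 1 # w', c, d} \<subseteq> words (Suc q)"
      using w bits by (auto simp: c_def d_def update_in_words)
    show "distinct [0 # w, 1 # w', c, d]"
      using m len by (auto simp: c_def d_def) (metis nth_list_update_eq)+
    show "\<forall>i<Suc q. (0 # w) ! i + (1 # w') ! i = c ! i + d ! i"
      using len m by (auto simp: c_def d_def nth_Cons' nth_list_update)
    show "parity (0 # w) + parity (1 # w') = parity c + parity d"
      using flip par parity_le_1[of w] by (auto simp: c_def d_def parity_Cons le_Suc_eq)
  qed simp
  moreover have "odd_tails (N + {#c, d#}) + 2 * parity w = odd_tails X + 2 * (1 - parity w)"
    using N flip par by (simp add: odd_tails_def c_def d_def)
  ultimately show thesis by (rule that)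
qed

lemma deg2_step_swap_bit_or_common_tail:
  assumes X: "set_mset X \<subseteq> words (Suc q)" and a: "0 # w \<in># X" and b: "1 # w' \<in># X"
    and par: "parity w = e" "parity w' = e"
  obtains X' where "deg2_step (Suc q) X X'" "odd_tails X' + 2 * e = odd_tails X + 2 * (1 - e)"
  | "\<forall>v\<in>#X. parity (tl v) = e \<longrightarrow> tl v = w"
proof (cases "\<forall>v\<in>#X. parity (tl v) = e \<longrightarrow> tl v = w")
  case True
  then show thesis by (rule that(2))
next
  case False
  then obtain t u where v: "t # u \<in># X" "parity u = e" "u \<noteq> w" "t \<in> {0, 1}"
    using X by (force elim!: words_SucE)
  have swap: thesis if "0 # y \<in># X" "1 # y' \<in># X" "parity y = e" "parity y' = e" "y \<noteq> y'" for y y'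
  proof -
    have "y \<in> words q" "y' \<in> words q" using X that(1,2) by auto
    then obtain m where "m < q" "y ! m \<noteq> y' ! m" using words_neq_nthE \<open>y \<noteq> y'\<close> by blast
    then show thesis
      using deg2_step_swap_bit[OF X that(1,2)] that(3,4) \<open>\<And>X'. _ \<Longrightarrow> _ \<Longrightarrow> thesis\<close> by metis
  qed
  (* Swap t # u with 0 # w if t = 1, with 1 # w' if t = 0 and u \<noteq> w', and otherwise swap 0 # w
     with 1 # w' = 1 # u. *)
  consider "t = 1" | "t = 0" "u \<noteq> w'" | "u = w'" using v(4) by auto
  then show thesis
    by cases (use swap a b v par in \<open>metis\<close>)+
qed

(* Compare the column sums at a coordinate where w and u differ. *)
lemma odd_tails_le_if_common_tails:
  assumes X: "set_mset X \<subseteq> words (Suc q)" and Y: "set_mset Y \<subseteq> words (Suc q)"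
    and margin: "margin (Suc q) X = margin (Suc q) Y"
    and common_X: "\<forall>v\<in>#X. parity (tl v) = 1 \<longrightarrow> tl v = w"
    and common_Y: "\<forall>v\<in>#Y. parity (tl v) = 0 \<longrightarrow> tl v = u"
    and "w \<in> words q" "u \<in> words q" "w \<noteq> u"
  shows "odd_tails X \<le> odd_tails Y"
proof -
  obtain m where m: "m < q" "w ! m \<noteq> u ! m"
    using words_neq_nthE assms(6-8) by blast
  have bit: "tl v ! m \<in> {0, 1}" "parity (tl v) \<in> {0, 1}" if "v \<in># X \<or> v \<in># Y" for v
  proof -
    have "tl v \<in> words q" using that X Y by (auto intro: tl_in_words)
    then show "tl v ! m \<in> {0, 1}" "parity (tl v) \<in> {0, 1}"
      using m(1) nth_words parity_le_1[of "tl v"] by auto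
  qed
  have cols: "(\<Sum>v\<in>#X. tl v ! m) = (\<Sum>v\<in>#Y. tl v ! m)"
    using margin m sum_mset_nth_Suc[OF X] sum_mset_nth_Suc[OF Y] by (auto simp: margin_eq_iff)
  have size: "size X = size Y" using margin by (simp add: margin_eq_iff)
  have "w ! m \<in> {0, 1}" "u ! m \<in> {0, 1}" using assms(6,7) m(1) nth_words by auto
  then consider "w ! m = 1" "u ! m = 0" | "w ! m = 0" "u ! m = 1" using m(2) by auto
  then show ?thesis
  proof cases
    case 1
    have "odd_tails X \<le> (\<Sum>v\<in>#X. tl v ! m)"
      unfolding odd_tails_def using bit common_X 1 by (intro sum_mset_mono) force
    also have "\<dots> \<le> odd_tails Y"
      unfolding cols odd_tails_def using bit common_Y 1 by (intro sum_mset_mono) force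
    finally show ?thesis .
  next
    case 2
    have "(\<Sum>v\<in>#X. tl v ! m) + odd_tails X \<le> size X"
      unfolding odd_tails_def size_eq_sum_mset sum_mset.distrib[symmetric]
      using bit common_X 2 by (intro sum_mset_mono) force
    moreover have "size Y \<le> (\<Sum>v\<in>#Y. tl v ! m) + odd_tails Y"
      unfolding odd_tails_def size_eq_sum_mset sum_mset.distrib[symmetric]
      using bit common_Y 2 by (intro sum_mset_mono) force
    ultimately show ?thesis using cols size by linarith
  qed
qed

lemma deg2_step_towards_odd_tails:
  assumes X: "set_mset X \<subseteq> words (Suc q)" and Y: "set_mset Y \<subseteq> words (Suc q)"
    and margin: "margin (Suc q) X = margin (Suc q) Y" and less: "odd_tails Y < odd_tails X"
  shows "(\<exists>X'. deg2_step (Suc q) X X' \<and> odd_tails X' + 2 = odd_tails X \<and> odd_tails Y \<le> odd_tails X') \<or>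
         (\<exists>Y'. deg2_step (Suc q) Y Y' \<and> odd_tails Y' = odd_tails Y + 2 \<and> odd_tails Y' \<le> odd_tails X)"
proof -
  note shift = class_counts_shift[OF X Y margin less]
  obtain w where w: "0 # w \<in># X" "parity w = 1"
    using class_count_posE[OF X, of 1 0] shift(1) by auto
  obtain w' where w': "1 # w' \<in># X" "parity w' = 1"
    using class_count_posE[OF X, of 1 1] shift(2) by auto
  obtain u where u: "0 # u \<in># Y" "parity u = 0"
    using class_count_posE[OF Y, of 0 0] shift(3) by auto
  obtain u' where u': "1 # u' \<in># Y" "parity u' = 0"
    using class_count_posE[OF Y, of 0 1] shift(4) by auto
  show ?thesis
  proof (rule deg2_step_swap_bit_or_common_tail[OF X w(1) w'(1) w(2) w'(2)])
    fix X' assume "deg2_step (Suc q) X X'" "odd_tails X' + 2 * 1 = odd_tails X + 2 * (1 - 1)"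
    then show ?thesis using shift(5) by auto
  next
    assume common_X: "\<forall>v\<in>#X. parity (tl v) = 1 \<longrightarrow> tl v = w"
    show ?thesis
    proof (rule deg2_step_swap_bit_or_common_tail[OF Y u(1) u'(1) u(2) u'(2)])
      fix Y' assume "deg2_step (Suc q) Y Y'" "odd_tails Y' + 2 * 0 = odd_tails Y + 2 * (1 - 0)"
      then show ?thesis using shift(5) by auto
    next
      assume "\<forall>v\<in>#Y. parity (tl v) = 0 \<longrightarrow> tl v = u"
      moreover have "w \<in> words q" "u \<in> words q" "w \<noteq> u" using X Y w u by auto
      ultimately have "odd_tails X \<le> odd_tails Y"
        using odd_tails_le_if_common_tails[OF X Y margin common_X] by blast
      then show ?thesis using less by simp
    qed
  qed
qed

section \<open>Connectivity of the margin fibers\<close>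

(* Each new tail takes the head of an old tail of the same parity. *)
lemma deg2_step_lift:
  assumes step: "deg2_step q (image_mset tl X) Y" and X: "set_mset X \<subseteq> words (Suc q)"
  obtains X' where "deg2_step (Suc q) X X'" "image_mset tl X' = Y"
proof -
  obtain N w1 w2 w3 w4 where tails: "image_mset tl X = add_mset w1 (add_mset w2 N)"
    and Y: "Y = N + {#w3, w4#}" and words: "{w1, w2, w3, w4} \<subseteq> words q"
    and dist: "distinct [w1, w2, w3, w4]" and cols: "\<forall>m<q. w1 ! m + w2 ! m = w3 ! m + w4 ! m"
    and par: "parity w1 + parity w2 = parity w3 + parity w4"
    using step unfolding deg2_step_def by auto
  obtain v1 X1 where "X = add_mset v1 X1" "tl v1 = w1" and X1: "image_mset tl X1 = add_mset w2 N"
    using msed_map_invR[OF tails] by blast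
  moreover obtain v2 X0 where "X1 = add_mset v2 X0" "tl v2 = w2" "image_mset tl X0 = N"
    using msed_map_invR[OF X1] by blast
  ultimately have X0: "X = X0 + {#v1, v2#}" "image_mset tl X0 = N" and v: "tl v1 = w1" "tl v2 = w2"
    by simp_all
  then obtain t1 t2 where v12: "v1 = t1 # w1" "v2 = t2 # w2" "t1 \<in> {0, 1}" "t2 \<in> {0, 1}"
    using X by (auto elim!: words_SucE)
  have "parity w3 = parity w1 \<and> parity w4 = parity w2 \<or> parity w3 = parity w2 \<and> parity w4 = parity w1"
    using par parity_le_1[of w1] parity_le_1[of w2] parity_le_1[of w3] parity_le_1[of w4] by linarith
  then obtain t3 t4 where t34: "t3 + t4 = t1 + t2" "t3 \<in> {0, 1}" "t4 \<in> {0, 1}"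
    and par34: "parity (t3 # w3) + parity (t4 # w4) = parity v1 + parity v2"
  proof (elim disjE conjE)
    assume "parity w3 = parity w1" "parity w4 = parity w2"
    then show thesis using that[of t1 t2] v12 by (simp add: parity_Cons)
  next
    assume "parity w3 = parity w2" "parity w4 = parity w1"
    then show thesis using that[of t2 t1] v12 by (simp add: parity_Cons)
  qed
  have "deg2_step (Suc q) X (X0 + {#t3 # w3, t4 # w4#})"
    unfolding deg2_step_def
  proof (intro exI conjI)
    show "X = X0 + {#v1, v2#}" by (fact X0(1))
    show "{v1, v2, t3 # w3, t4 # w4} \<subseteq> words (Suc q)" using v12 t34 words by auto
    show "distinct [v1, v2, t3 # w3, t4 # w4]" using v12 dist by auto
    show "\<forall>m<Suc q. v1 ! m + v2 ! m = (t3 # w3) ! m + (t4 # w4) ! m"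
      using v12 t34 cols by (auto simp: nth_Cons')
  qed (simp_all add: par34)
  moreover have "image_mset tl (X0 + {#t3 # w3, t4 # w4#}) = Y" using X0 Y by simp
  ultimately show thesis by (rule that)
qed

lemma deg2_steps_lift:
  assumes "(deg2_step q)\<^sup>*\<^sup>* (image_mset tl X) Y" "set_mset X \<subseteq> words (Suc q)"
  shows "\<exists>X'. (deg2_step (Suc q))\<^sup>*\<^sup>* X X' \<and> image_mset tl X' = Y"
  using assms(1)
proof (induction rule: rtranclp_induct)
  case (step Y Y')
  then obtain X' where X': "(deg2_step (Suc q))\<^sup>*\<^sup>* X X'" "image_mset tl X' = Y" by blast
  moreover obtain X'' where "deg2_step (Suc q) X' X''" "image_mset tl X'' = Y'"
    using deg2_step_lift step(2) X' deg2_steps_words[OF X'(1) assms(2)] by metis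
  ultimately show ?case by (blast intro: rtranclp.rtrancl_into_rtrancl)
qed blast

lemma deg2_step_exchange_heads:
  assumes X: "set_mset X \<subseteq> words (Suc q)" and a: "t # w \<in># X" and b: "t' # w' \<in># X"
    and "t' = 1 - t" "w \<noteq> w'" "parity w = parity w'"
  obtains N where "X = N + {#t # w, t' # w'#}" "deg2_step (Suc q) X (N + {#t' # w, t # w'#})"
proof -
  have "t \<in> {0, 1}" "w \<in> words q" "w' \<in> words q" using X a b by auto
  then have words: "{t # w, t' # w', t' # w, t # w'} \<subseteq> words (Suc q)" and "t \<noteq> t'"
    using \<open>t' = 1 - t\<close> by auto
  obtain N where N: "X = N + {#t # w, t' # w'#}"
    using multi_member_pair_split[OF _ a b] \<open>t \<noteq> t'\<close> by blast
  moreover have "deg2_step (Suc q) X (N + {#t' # w, t # w'#})"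
    unfolding deg2_step_def
  proof (intro exI conjI)
    show "X = N + {#t # w, t' # w'#}" by (fact N)
    show "{t # w, t' # w', t' # w, t # w'} \<subseteq> words (Suc q)" by (fact words)
    show "distinct [t # w, t' # w', t' # w, t # w']" using \<open>t \<noteq> t'\<close> \<open>w \<noteq> w'\<close> by simp
    show "\<forall>m<Suc q. (t # w) ! m + (t' # w') ! m = (t' # w) ! m + (t # w') ! m"
      by (auto simp: nth_Cons')
    show "parity (t # w) + parity (t' # w') = parity (t' # w) + parity (t # w')"
      using \<open>parity w = parity w'\<close> by (simp add: parity_Cons)
  qed simp
  ultimately show thesis by (rule that)
qed

lemma deg2_step_same_tails_closer:
  assumes X: "set_mset X \<subseteq> words (Suc q)" and Y: "set_mset Y \<subseteq> words (Suc q)"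
    and margin: "margin (Suc q) X = margin (Suc q) Y" and tails: "image_mset tl X = image_mset tl Y"
    and "X \<noteq> Y"
  obtains X' where "deg2_step (Suc q) X X'" "image_mset tl X' = image_mset tl Y"
    "size (X' - Y) < size (X - Y)"
proof -
  have "size X = size Y" using margin by (simp add: margin_eq_iff)
  then obtain v where "count Y v < count X v"
    using size_eq_ex_count_lt \<open>X \<noteq> Y\<close> by metis
  moreover from this have "v \<in># X" by (simp add: count_gt_imp_in_mset)
  then obtain t w where v: "v = t # w" "t \<in> {0, 1}" "w \<in> words q"
    using X by (auto elim!: words_SucE)
  define t' where "t' = 1 - t"
  have same_tail: "count X (t # y) + count X (t' # y) = count Y (t # y) + count Y (t' # y)" for y
    using count_image_tl[OF X, of y] count_image_tl[OF Y, of y] tails v(2) by (auto simp: t'_def)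
  let ?P = "\<lambda>x. parity (tl x) = parity w \<and> hd x = t"
  have "class_count X (parity w) t = class_count Y (parity w) t"
    using class_counts_eq[OF X Y margin] odd_tails_image_tl[of X] odd_tails_image_tl[of Y]
      tails parity_le_1 v(2) by auto
  then obtain u where u: "?P u" "u \<noteq> v" "count X u < count Y u"
    using count_less_elsewhere[of ?P X Y v] \<open>count Y v < count X v\<close> v(1)
    unfolding class_count_def by auto
  moreover from this have "u \<in> words (Suc q)" using Y by (auto simp: count_gt_imp_in_mset)
  then obtain t2 w' where "u = t2 # w'" by (auto elim: words_SucE)
  ultimately have w': "u = t # w'" "parity w' = parity w" "w' \<noteq> w"
    using v(1) by auto
  have v': "count X (t' # w) < count Y (t' # w)"
    using same_tail[of w] \<open>count Y v < count X v\<close> v(1) by simp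
  have u': "count Y (t' # w') < count X (t' # w')"
    using same_tail[of w'] u(3) w'(1) by simp
  obtain N where N: "X = N + {#t # w, t' # w'#}"
    and step: "deg2_step (Suc q) X (N + {#t' # w, t # w'#})"
  proof (rule deg2_step_exchange_heads[OF X, of t w t' w'])
    show "t # w \<in># X" using \<open>v \<in># X\<close> v(1) by simp
    show "t' # w' \<in># X" using u' by (metis not_in_iff not_less0)
  qed (use w' t'_def in auto)
  have "image_mset tl (N + {#t' # w, t # w'#}) = image_mset tl Y" using N tails by simp
  moreover have "size (N + {#t' # w, t # w'#} - Y) < size (X - Y)"
  proof (rule size_diff_exchange_less[OF N])
    show "distinct [t # w, t' # w', t' # w, t # w']" using v(2) w'(3) by (auto simp: t'_def)
  qed (use v' u' \<open>count Y v < count X v\<close> u(3) v(1) w'(1) in auto)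
  ultimately show thesis by (rule that[OF step])
qed

lemma deg2_steps_same_tails:
  assumes "set_mset X \<subseteq> words (Suc q)" "set_mset Y \<subseteq> words (Suc q)"
    and "margin (Suc q) X = margin (Suc q) Y" "image_mset tl X = image_mset tl Y"
  shows "(deg2_step (Suc q))\<^sup>*\<^sup>* X Y"
  using assms
proof (induction "size (X - Y)" arbitrary: X rule: less_induct)
  case less
  show ?case
  proof (cases "X = Y")
    case False
    with less.prems obtain X' where step: "deg2_step (Suc q) X X'"
      and tails: "image_mset tl X' = image_mset tl Y" and closer: "size (X' - Y) < size (X - Y)"
      by (rule deg2_step_same_tails_closer)
    have "(deg2_step (Suc q))\<^sup>*\<^sup>* X' Y"
      using deg2_step_margin[OF step] less.prems(3)
      by (intro less.hyps[OF closer deg2_step_words[OF step less.prems(1)] less.prems(2) _ tails]) simp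
    with step show ?thesis by (rule converse_rtranclp_into_rtranclp)
  qed simp
qed

definition margin_connected :: "nat \<Rightarrow> bool" where
  "margin_connected q \<longleftrightarrow> (\<forall>X Y. set_mset X \<subseteq> words q \<longrightarrow> set_mset Y \<subseteq> words q \<longrightarrow>
     margin q X = margin q Y \<longrightarrow> (deg2_step q)\<^sup>*\<^sup>* X Y)"

lemma margin_connectedD:
  "margin_connected q \<Longrightarrow> set_mset X \<subseteq> words q \<Longrightarrow> set_mset Y \<subseteq> words q \<Longrightarrow>
    margin q X = margin q Y \<Longrightarrow> (deg2_step q)\<^sup>*\<^sup>* X Y"
  unfolding margin_connected_def by blast

lemma margin_connected_0: "margin_connected 0"
  unfolding margin_connected_def
proof (intro allI impI)
  fix X Y assume X: "set_mset X \<subseteq> words 0" and Y: "set_mset Y \<subseteq> words 0"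
    and "margin 0 X = margin 0 Y"
  then have "size X = size Y" by (simp add: margin_eq_iff)
  moreover have "X = replicate_mset (size X) []" "Y = replicate_mset (size Y) []"
    using X Y by (simp_all add: words_0 set_mset_subset_singletonD)
  ultimately show "(deg2_step 0)\<^sup>*\<^sup>* X Y" by simp
qed

lemma deg2_steps_same_odd_tails:
  assumes IH: "margin_connected q"
    and X: "set_mset X \<subseteq> words (Suc q)" and Y: "set_mset Y \<subseteq> words (Suc q)"
    and margin: "margin (Suc q) X = margin (Suc q) Y" and "odd_tails X = odd_tails Y"
  shows "(deg2_step (Suc q))\<^sup>*\<^sup>* X Y"
proof -
  have tails: "set_mset (image_mset tl Z) \<subseteq> words q" if "set_mset Z \<subseteq> words (Suc q)" for Z
    using that by (auto intro: tl_in_words)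
  have "(deg2_step q)\<^sup>*\<^sup>* (image_mset tl X) (image_mset tl Y)"
    using margin_connectedD[OF IH tails[OF X] tails[OF Y]]
      margin_tails_eq[OF X Y margin \<open>odd_tails X = odd_tails Y\<close>] .
  then obtain X' where X': "(deg2_step (Suc q))\<^sup>*\<^sup>* X X'" "image_mset tl X' = image_mset tl Y"
    using deg2_steps_lift X by blast
  have "(deg2_step (Suc q))\<^sup>*\<^sup>* X' Y"
  proof (rule deg2_steps_same_tails[OF _ Y _ X'(2)])
    show "set_mset X' \<subseteq> words (Suc q)" using deg2_steps_words[OF X'(1) X] .
    show "margin (Suc q) X' = margin (Suc q) Y" using deg2_steps_margin[OF X'(1)] margin by simp
  qed
  with X'(1) show ?thesis by (rule rtranclp_trans)
qed

lemma deg2_steps_connect_Suc: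
  assumes IH: "margin_connected q"
    and "set_mset X \<subseteq> words (Suc q)" "set_mset Y \<subseteq> words (Suc q)"
    and "margin (Suc q) X = margin (Suc q) Y" "odd_tails Y \<le> odd_tails X"
  shows "(deg2_step (Suc q))\<^sup>*\<^sup>* X Y"
  using assms(2-5)
proof (induction "odd_tails X - odd_tails Y" arbitrary: X Y rule: less_induct)
  case less
  note X = less.prems(1) and Y = less.prems(2) and margin = less.prems(3)
  show ?case
  proof (cases "odd_tails Y < odd_tails X")
    case False
    then show ?thesis
      using deg2_steps_same_odd_tails[OF IH X Y margin] less.prems(4) by simp
  next
    case True
    from deg2_step_towards_odd_tails[OF X Y margin True] show ?thesis
    proof (elim disjE exE conjE)
      fix X' assume step: "deg2_step (Suc q) X X'"
        and "odd_tails X' + 2 = odd_tails X" "odd_tails Y \<le> odd_tails X'"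
      then have "(deg2_step (Suc q))\<^sup>*\<^sup>* X' Y"
        using deg2_step_margin[OF step] margin
        by (intro less.hyps[OF _ deg2_step_words[OF step X] Y]) simp_all
      with step show ?thesis by (rule converse_rtranclp_into_rtranclp)
    next
      fix Y' assume step: "deg2_step (Suc q) Y Y'"
        and "odd_tails Y' = odd_tails Y + 2" "odd_tails Y' \<le> odd_tails X"
      then have "(deg2_step (Suc q))\<^sup>*\<^sup>* X Y'"
        using deg2_step_margin[OF step] margin
        by (intro less.hyps[OF _ X deg2_step_words[OF step Y]]) simp_all
      moreover have "deg2_step (Suc q) Y' Y"
        using sympD[OF symp_deg2_step step] .
      ultimately show ?thesis by (rule rtranclp.rtrancl_into_rtrancl)
    qed
  qed
qed

lemma margin_connected_Suc:
  assumes "margin_connected q"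
  shows "margin_connected (Suc q)"
  unfolding margin_connected_def
proof (intro allI impI)
  fix X Y assume X: "set_mset X \<subseteq> words (Suc q)" and Y: "set_mset Y \<subseteq> words (Suc q)"
    and margin: "margin (Suc q) X = margin (Suc q) Y"
  show "(deg2_step (Suc q))\<^sup>*\<^sup>* X Y"
  proof (cases "odd_tails Y \<le> odd_tails X")
    case True
    then show ?thesis using deg2_steps_connect_Suc[OF assms X Y margin] by blast
  next
    case False
    then have "(deg2_step (Suc q))\<^sup>*\<^sup>* Y X"
      using deg2_steps_connect_Suc[OF assms Y X] margin by simp
    then show ?thesis by (rule sympD[OF symp_rtranclp[OF symp_deg2_step]])
  qed
qed

theorem margin_connected: "margin_connected q"
  by (induction q) (auto intro: margin_connected_0 margin_connected_Suc)

section \<open>Frequency vectors and the fibers of M'\<close>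

definition freq :: "nat list multiset \<Rightarrow> nat list \<Rightarrow> int" where
  "freq X i = int (count X i)"

lemma cells_eq_words: "cells p = words (p - 1)"
  by (simp add: cells_def words_def)

lemma Mt_freq: "set_mset X \<subseteq> words q \<Longrightarrow> Mt (Suc q) (freq X) j = (\<Sum>v\<in>#X. modelM (Suc q) v j)"
  unfolding Mt_def freq_def cells_eq_words diff_Suc_1 using finite_words by (rule sum_count_eq_sum_mset)

lemma neg_one_power_eq: "(-1 :: int) ^ n = 1 - 2 * int (n mod 2)"
  by (induction n) (auto simp: mod_Suc)

lemma Mt_freq_columns:
  assumes X: "set_mset X \<subseteq> words q"
  shows "Mt (Suc q) (freq X) 0 = int (size X)"
    and "m < q \<Longrightarrow> Mt (Suc q) (freq X) (Suc m) = int (size X) - 2 * int (\<Sum>v\<in>#X. v ! m)"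
    and "Mt (Suc q) (freq X) (Suc q) = int (size X) - 2 * int (\<Sum>v\<in>#X. parity v)"
proof -
  show "Mt (Suc q) (freq X) 0 = int (size X)"
    using Mt_freq[OF X] by (simp add: modelM_def)
  show "Mt (Suc q) (freq X) (Suc m) = int (size X) - 2 * int (\<Sum>v\<in>#X. v ! m)" if "m < q"
  proof -
    have "modelM (Suc q) v (Suc m) = 1 - 2 * int (v ! m)" if "v \<in> words q" for v
      using nth_words[OF that \<open>m < q\<close>] \<open>m < q\<close> by (auto simp: modelM_def neg_one_power_eq)
    with X show ?thesis unfolding Mt_freq[OF X] by (induction X) auto
  qed
  show "Mt (Suc q) (freq X) (Suc q) = int (size X) - 2 * int (\<Sum>v\<in>#X. parity v)"
    unfolding Mt_freq[OF X] by (induction X) (simp_all add: modelM_def parity_def neg_one_power_eq)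
qed

lemma Mt_freq_eq_iff_margin_eq:
  assumes X: "set_mset X \<subseteq> words q" and Y: "set_mset Y \<subseteq> words q"
  shows "(\<forall>j\<le>Suc q. Mt (Suc q) (freq X) j = Mt (Suc q) (freq Y) j) \<longleftrightarrow> margin q X = margin q Y"
proof
  assume Mt: "\<forall>j\<le>Suc q. Mt (Suc q) (freq X) j = Mt (Suc q) (freq Y) j"
  then have "size X = size Y" using Mt_freq_columns(1)[OF X] Mt_freq_columns(1)[OF Y] by auto
  with Mt show "margin q X = margin q Y"
    using Mt_freq_columns(2,3)[OF X] Mt_freq_columns(2,3)[OF Y]
    by (auto simp: margin_eq_iff simp del: of_nat_sum_mset)
next
  assume "margin q X = margin q Y"
  then have "Mt (Suc q) (freq X) j = Mt (Suc q) (freq Y) j" if "j \<le> Suc q" for j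
    using that less_Suc_eq_0_disj[of "j - 1" q] Mt_freq_columns[OF X] Mt_freq_columns[OF Y]
    by (cases j) (auto simp: margin_eq_iff le_Suc_eq simp del: of_nat_sum_mset)
  then show "\<forall>j\<le>Suc q. Mt (Suc q) (freq X) j = Mt (Suc q) (freq Y) j" by blast
qed

lemma is_nonneg_vec_freq: "set_mset X \<subseteq> cells p \<Longrightarrow> is_nonneg_vec p (freq X)"
  by (auto simp: is_nonneg_vec_def is_vec_def freq_def not_in_iff[symmetric])

lemma freq_in_fiber_iff:
  assumes X: "set_mset X \<subseteq> words q" and Y: "set_mset Y \<subseteq> words q"
    and "freq X \<in> fiber (Suc q) b"
  shows "freq Y \<in> fiber (Suc q) b \<longleftrightarrow> margin q X = margin q Y"
  using assms(3) is_nonneg_vec_freq[of Y "Suc q"] Y Mt_freq_eq_iff_margin_eq[OF X Y]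
  by (auto simp: fiber_def cells_eq_words)

lemma nonneg_vec_freqE:
  assumes "is_nonneg_vec p x"
  obtains X where "set_mset X \<subseteq> cells p" "x = freq X"
proof
  define X where "X = (\<Sum>i\<in>cells p. replicate_mset (nat (x i)) i)"
  have count: "count X i = (if i \<in> cells p then nat (x i) else 0)" for i
  proof -
    have "finite (cells p)" by (simp add: cells_eq_words finite_words)
    then show ?thesis by (simp add: X_def count_sum)
  qed
  show "set_mset X \<subseteq> cells p"
  proof
    fix i assume "i \<in># X"
    then show "i \<in> cells p" using count[of i] by (auto simp: not_in_iff[symmetric] split: if_splits)
  qed
  show "x = freq X"
    using assms count by (auto simp: is_nonneg_vec_def is_vec_def freq_def)
qed

lemma Mt_diff: "Mt p (\<lambda>i. y i - x i) j = Mt p y j - Mt p x j"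
  by (simp add: Mt_def algebra_simps sum_subtractf)

lemma sqfree_deg2_movesI:
  assumes "is_move p z" "{a, b, c, d} \<subseteq> cells p" "distinct [a, b, c, d]"
    and "z a = 1" "z b = 1" "z c = -1" "z d = -1" "\<forall>i. i \<notin> {a, b, c, d} \<longrightarrow> z i = 0"
  shows "z \<in> sqfree_deg2_moves p"
  unfolding sqfree_deg2_moves_def using assms by blast

lemma deg2_step_fiber_edge:
  assumes step: "deg2_step q X Y" and X: "set_mset X \<subseteq> words q" and x: "freq X \<in> fiber (Suc q) b"
  shows "fiber_edge (Suc q) b (sqfree_deg2_moves (Suc q)) (freq X) (freq Y)"
proof -
  obtain N a a' c c' where XY: "X = N + {#a, a'#}" "Y = N + {#c, c'#}"
    and words: "{a, a', c, c'} \<subseteq> words q" and dist: "distinct [a, a', c, c']"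
    using step unfolding deg2_step_def by blast
  have Y: "set_mset Y \<subseteq> words q" using deg2_step_words[OF step X] .
  have y: "freq Y \<in> fiber (Suc q) b"
    using freq_in_fiber_iff[OF X Y x] deg2_step_margin[OF step] by simp
  define z where "z = (\<lambda>i. freq Y i - freq X i)"
  have "is_move (Suc q) z"
    using x y Mt_diff[of "Suc q" "freq Y" "freq X"]
    by (auto simp: is_move_def is_vec_def z_def fiber_def is_nonneg_vec_def)
  moreover have "z c = 1" "z c' = 1" "z a = -1" "z a' = -1" "\<forall>i. i \<notin> {c, c', a, a'} \<longrightarrow> z i = 0"
    using dist by (auto simp: z_def freq_def XY)
  ultimately have "z \<in> sqfree_deg2_moves (Suc q)"
    using words dist by (intro sqfree_deg2_movesI) (auto simp: cells_eq_words)
  then show ?thesis using x y by (simp add: fiber_edge_def z_def)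
qed

lemma deg2_steps_fiber_path:
  assumes "(deg2_step q)\<^sup>*\<^sup>* X Y" "set_mset X \<subseteq> words q" "freq X \<in> fiber (Suc q) b"
  shows "(fiber_edge (Suc q) b (sqfree_deg2_moves (Suc q)))\<^sup>*\<^sup>* (freq X) (freq Y)"
  using assms
proof (induction rule: converse_rtranclp_induct)
  case (step X X')
  then have edge: "fiber_edge (Suc q) b (sqfree_deg2_moves (Suc q)) (freq X) (freq X')"
    by (intro deg2_step_fiber_edge)
  moreover have "freq X' \<in> fiber (Suc q) b" using edge by (simp add: fiber_edge_def)
  then have "(fiber_edge (Suc q) b (sqfree_deg2_moves (Suc q)))\<^sup>*\<^sup>* (freq X') (freq Y)"
    using step deg2_step_words by blast
  ultimately show ?case by (rule converse_rtranclp_into_rtranclp)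
qed simp

lemma fiber_connected_sqfree_deg2_moves: "fiber_connected (Suc q) b (sqfree_deg2_moves (Suc q))"
  unfolding fiber_connected_def
proof (intro ballI)
  fix x y assume x: "x \<in> fiber (Suc q) b" and y: "y \<in> fiber (Suc q) b"
  have cells: "cells (Suc q) = words q" by (simp add: cells_eq_words)
  obtain X where X: "set_mset X \<subseteq> words q" "x = freq X"
    using nonneg_vec_freqE[of "Suc q" x] x unfolding fiber_def cells by blast
  obtain Y where Y: "set_mset Y \<subseteq> words q" "y = freq Y"
    using nonneg_vec_freqE[of "Suc q" y] y unfolding fiber_def cells by blast
  have "margin q X = margin q Y"
    using freq_in_fiber_iff[OF X(1) Y(1)] x y unfolding X(2) Y(2) by simp
  then have "(deg2_step q)\<^sup>*\<^sup>* X Y"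
    by (rule margin_connectedD[OF margin_connected X(1) Y(1)])
  then show "(fiber_edge (Suc q) b (sqfree_deg2_moves (Suc q)))\<^sup>*\<^sup>* x y"
    unfolding X(2) Y(2) using X(1) x[unfolded X(2)] by (rule deg2_steps_fiber_path)
qed

lemma finite_sqfree_deg2_moves: "finite (sqfree_deg2_moves p)"
proof -
  let ?move = "\<lambda>(a, b, c, d) i.
    of_bool (i = a) + of_bool (i = b) - of_bool (i = c) - (of_bool (i = d) :: int)"
  have "sqfree_deg2_moves p \<subseteq> ?move ` (cells p \<times> cells p \<times> cells p \<times> cells p)"
  proof
    fix z assume "z \<in> sqfree_deg2_moves p"
    then obtain a b c d where abcd: "a \<in> cells p" "b \<in> cells p" "c \<in> cells p" "d \<in> cells p"
      "distinct [a, b, c, d]" "z a = 1" "z b = 1" "z c = -1" "z d = -1"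
      "\<forall>i. i \<notin> {a, b, c, d} \<longrightarrow> z i = 0"
      unfolding sqfree_deg2_moves_def by blast
    then have "z = ?move (a, b, c, d)" by (auto simp: fun_eq_iff)
    with abcd show "z \<in> ?move ` (cells p \<times> cells p \<times> cells p \<times> cells p)" by blast
  qed
  moreover have "finite (cells p)" by (simp add: cells_eq_words finite_words)
  ultimately show ?thesis by (auto intro: finite_subset)
qed

lemma markov_basis_minimal_subsetE:
  assumes "markov_basis p B"
  obtains B' where "B' \<subseteq> B" "minimal_markov_basis p B'"
proof -
  let ?C = "{B'. B' \<subseteq> B \<and> markov_basis p B'}"
  have "finite ?C" using assms by (simp add: markov_basis_def)
  then obtain B' where B': "B' \<in> ?C" and min: "\<forall>B''\<in>?C. B'' \<le> B' \<longrightarrow> B' = B''"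
    using finite_has_minimal[of ?C] assms by blast
  have "minimal_markov_basis p B'"
    unfolding minimal_markov_basis_def using B' min by blast
  with B' that show thesis by blast
qed

theorem theorem1:
  fixes p :: nat
  assumes "2 \<le> p"
  shows "markov_basis p (sqfree_deg2_moves p) \<and>
         (\<exists>B. B \<subseteq> sqfree_deg2_moves p \<and> minimal_markov_basis p B)"
proof -
  obtain q where p: "p = Suc q" using assms by (cases p) auto
  have "markov_basis p (sqfree_deg2_moves p)"
    unfolding markov_basis_def p
    using finite_sqfree_deg2_moves fiber_connected_sqfree_deg2_moves
    by (auto simp: sqfree_deg2_moves_def)
  moreover from this obtain B where "B \<subseteq> sqfree_deg2_moves p" "minimal_markov_basis p B"
    by (rule markov_basis_minimal_subsetE)
  ultimately show ?thesis by blast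
qed

end
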